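(* Let $\sigma$ be a valid composite state of $\mathcal{M}uddy\mathcal{P}uzzle$ reachable by a valid trace from a composite initial state $\sigma^0$ with $\mathbf{consistent}(\sigma^0)$, and suppose $\sigma\notin S_F$. Then there exist a component $i$ and a valid transition (labeled $(i,l)$ for some $l$) from $\sigma$ to a state $\sigma'$ such that $\mathit{round}(\sigma'_i)>\mathit{round}(\sigma_i)$.
   Context: Fix $n \ge 1$ children indexed $1,\dots,n$. A message is a triple $\langle j, r, s\rangle$ with $j \in \{1,\dots,n\}$ (the sender), $r \in \mathbb{N}$ (a round number) and $s \in \{u,m,c\}$ (epistemic status: $u$ = "does not know own status", $m$ = "knows they are muddy", $c$ = "knows they are clean"); $\bot$ denotes "no message". Child $i$ is a VLSM $\mathcal{C}_i$ with labels $\{\mathit{init},\mathit{emit},\mathit{receive}\}$, no initial messages, initial states $\langle \mathit{Obs}\rangle$ with $\mathit{Obs}\subseteq\{1,\dots,n\}$, and running states $\langle \mathit{Obs}, r, s\rangle$ with $\mathit{Obs}\subseteq\{1,\dots,n\}$, $r\in\mathbb{N}$, $s\in\{u,m,c\}$; $\mathit{Obs}(\cdot)$ denotes the observation set of either kind of state. Transitions $\tau_i$ and local validity $\beta_i$: - init: enabled only on an initial state $\langle\mathit{Obs}\rangle$ with input $\bot$; goes to $\langle \mathit{Obs},0,u\rangle$ if $\mathit{Obs}\ne\emptyset$ and to $\langle\mathit{Obs},0,m\rangle$ if $\mathit{Obs}=\emptyset$; output $\bot$. - emit: enabled only on a running state $\langle\mathit{Obs},r,s\rangle$ with input $\bot$;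 state unchanged, output $\langle i,r,s\rangle$. - receive: on a running state $\langle\mathit{Obs},r,s\rangle$ with input message $\langle j,r',s'\rangle$, output $\bot$, new state given by the first applicable case: (R1) $s\in\{m,c\}$: unchanged. Otherwise $s=u$ and: (R2) $s'=c$, $j\notin\mathit{Obs}$, $r'=|\mathit{Obs}|$: $\langle\mathit{Obs},r',c\rangle$; (R3) $s'=c$, $j\notin\mathit{Obs}$, $r'=|\mathit{Obs}|+1$: $\langle\mathit{Obs},r'-1,m\rangle$; (R4) $s'=m$, $j\in\mathit{Obs}$, $r'=|\mathit{Obs}|$: $\langle\mathit{Obs},r',m\rangle$; (R5) $s'=m$, $j\in\mathit{Obs}$, $r'=|\mathit{Obs}|-1$: $\langle\mathit{Obs},r'+1,c\rangle$; (R6) $s'=u$, $j\in\mathit{Obs}$, $r'<r$: unchanged; (R7) $s'=u$, $j\in\mathit{Obs}$, $r\le r'<|\mathit{Obs}|-1$: $\langle\mathit{Obs},r'+1,u\rangle$; (R8) $s'=u$, $j\in\mathit{Obs}$, $r'=|\mathit{Obs}|-1$: $\langle\mathit{Obs},r'+1,m\rangle$; (R9) $s'=u$, $j\notin\mathit{Obs}$, $r'\le r$: unchanged; (R10) $s'=u$, $j\notin\mathit{Obs}$, $r<r'<|\mathit{Obs}|$: $\langle\mathit{Obs},r',u\rangle$; (R11) $s'=u$, $j\notin\mathit{Obs}$, $r'=|\mathit{Obs}|$: $\langle\mathit{Obs},r',m\rangle$. $\beta_i$ for receive holds exactly when one of (R1)–(R11) applies. Composition $\mathcal{M}uddy\mathcal{P}uzzle=(\mathcal{C}_1+\dots+\mathcal{C}_n)|_\varphi$: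 composite states are tuples $\sigma=(\sigma_1,\dots,\sigma_n)$; composite initial states ($S_0$) are those with every component initial; labels are pairs $(i,l)$; transition $(i,l)$ with input $\mu$ applies $\tau_i(l,\sigma_i,\mu)$ to component $i$, leaves the others unchanged, and is allowed iff $\beta_i(l,\sigma_i,\mu)\wedge\varphi((i,l),\sigma,\mu)$. For a composite state $\sigma$ let $M=\bigcup_{i}\mathit{Obs}(\sigma_i)$; $\mathbf{consistent}(\sigma)$ means $M\ne\emptyset$ and $\mathit{Obs}(\sigma_i)=M\setminus\{i\}$ for all $i$. The composition constraint: $\varphi((i,\mathit{init}),\sigma,\mu)=\mathbf{consistent}(\sigma)$; $\varphi((i,\mathit{emit}),\sigma,\mu)=\text{true}$; $\varphi((i,\mathit{receive}),\sigma,\langle j,r',s'\rangle)$ holds iff $\sigma_j$ is a running state $\langle \mathit{Obs}_j,r_j,s_j\rangle$ and $(s'=s_j\wedge r'=r_j)\vee(s'=u\wedge r'<r_j)$. Validity (VLSM sense): a transition is constrained if its input satisfies the constraint. Valid traces and valid messages are defined by simultaneous induction: a valid trace is a finite sequence of constrained transitions starting in a composite initial state in which every input message is either $\bot$ or a valid message; a valid message is one output by some transition of some valid trace. A valid state is one reachable by a valid trace; a valid transition is a constrained transition from a valid state whose input is $\bot$ or a valid message. $S_V$ is the set of valid states. The set of final states is $S_F=\{\sigma\in S_V \mid$ every component $\sigma_i$ is a running state with status $\ne u\}$. For a child state, $\mathit{round}(\langle\mathit{Obs}\rangle)=-1$ and $\mathit{round}(\langle\mathit{Obs},r,s\rangle)=r$.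 *)

theory Defs
  imports Main
begin

datatype status = U | Mu | Cl   (* u: unknown, m: knows muddy, c: knows clean *)

type_synonym msg = "nat \<times> nat \<times> status"

datatype cstate = Init "nat set" | Run "nat set" nat status

datatype label = LInit | LEmit | LReceive

fun obs :: "cstate \<Rightarrow> nat set" where
  "obs (Init Ob) = Ob"
| "obs (Run Ob r s) = Ob"

fun round :: "cstate \<Rightarrow> int" where
  "round (Init Ob) = -1"
| "round (Run Ob r s) = int r"

(* receive: cases R1--R11 (first applicable); None iff no case applies (beta false) *)
fun recv :: "nat set \<Rightarrow> nat \<Rightarrow> status \<Rightarrow> msg \<Rightarrow> cstate option" where
  "recv Ob r s (j, r', s') =
    (if s = Mu \<or> s = Cl then Some (Run Ob r s)
     else if s' = Cl \<and> j \<notin> Ob \<and> r' = card Ob then Some (Run Ob r' Cl)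
     else if s' = Cl \<and> j \<notin> Ob \<and> r' = card Ob + 1 then Some (Run Ob (r' - 1) Mu)
     else if s' = Mu \<and> j \<in> Ob \<and> r' = card Ob then Some (Run Ob r' Mu)
     else if s' = Mu \<and> j \<in> Ob \<and> int r' = int (card Ob) - 1 then Some (Run Ob (r' + 1) Cl)
     else if s' = U \<and> j \<in> Ob \<and> r' < r then Some (Run Ob r s)
     else if s' = U \<and> j \<in> Ob \<and> r \<le> r' \<and> int r' < int (card Ob) - 1 then Some (Run Ob (r' + 1) U)
     else if s' = U \<and> j \<in> Ob \<and> int r' = int (card Ob) - 1 then Some (Run Ob (r' + 1) Mu)
     else if s' = U \<and> j \<notin> Ob \<and> r' \<le> r then Some (Run Ob r s)
     else if s' = U \<and> j \<notin> Ob \<and> r < r' \<and> r' < card Ob then Some (Run Ob r' U)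
     else if s' = U \<and> j \<notin> Ob \<and> r' = card Ob then Some (Run Ob r' Mu)
     else None)"

(* transition tau_i of child i, defined exactly when beta_i holds;
   result = (new state, output), None = transition not enabled / beta false *)
fun child_step :: "nat \<Rightarrow> label \<Rightarrow> cstate \<Rightarrow> msg option \<Rightarrow> (cstate \<times> msg option) option" where
  "child_step i LInit (Init Ob) None = Some (Run Ob 0 (if Ob = {} then Mu else U), None)"
| "child_step i LEmit (Run Ob r s) None = Some (Run Ob r s, Some (i, r, s))"
| "child_step i LReceive (Run Ob r s) (Some m) = map_option (\<lambda>st. (st, None)) (recv Ob r s m)"
| "child_step i l st \<mu> = None"

(* composite states: functions nat => cstate; only components 1..n are meaningful,
   the others are fixed to Init {} *)
type_synonym cstate_comp = "nat \<Rightarrow> cstate"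

definition is_msg :: "nat \<Rightarrow> msg \<Rightarrow> bool" where
  "is_msg n m \<longleftrightarrow> fst m \<in> {1..n}"

definition comp_initial :: "nat \<Rightarrow> cstate_comp \<Rightarrow> bool" where
  "comp_initial n \<sigma> \<longleftrightarrow>
     (\<forall>i\<in>{1..n}. \<exists>Ob. Ob \<subseteq> {1..n} \<and> \<sigma> i = Init Ob) \<and>
     (\<forall>i. i \<notin> {1..n} \<longrightarrow> \<sigma> i = Init {})"

definition consistent :: "nat \<Rightarrow> cstate_comp \<Rightarrow> bool" where
  "consistent n \<sigma> \<longleftrightarrow>
     (let M = (\<Union>i\<in>{1..n}. obs (\<sigma> i)) in M \<noteq> {} \<and> (\<forall>i\<in>{1..n}. obs (\<sigma> i) = M - {i}))"

fun phi :: "nat \<Rightarrow> nat \<Rightarrow> label \<Rightarrow> cstate_comp \<Rightarrow> msg option \<Rightarrow> bool" where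
  "phi n i LInit \<sigma> \<mu> = consistent n \<sigma>"
| "phi n i LEmit \<sigma> \<mu> = True"
| "phi n i LReceive \<sigma> None = False"
| "phi n i LReceive \<sigma> (Some (j, r', s')) =
     (j \<in> {1..n} \<and> (\<exists>Obj rj sj. \<sigma> j = Run Obj rj sj \<and>
        ((s' = sj \<and> r' = rj) \<or> (s' = U \<and> r' < rj))))"

definition comp_step :: "nat \<Rightarrow> nat \<Rightarrow> label \<Rightarrow> cstate_comp \<Rightarrow> msg option
                         \<Rightarrow> (cstate_comp \<times> msg option) option" where
  "comp_step n i l \<sigma> \<mu> =
     (if i \<in> {1..n} \<and> (\<forall>m. \<mu> = Some m \<longrightarrow> is_msg n m) \<and> phi n i l \<sigma> \<mu> then
        map_option (\<lambda>(st, out). (\<sigma>(i := st), out)) (child_step i l (\<sigma> i) \<mu>)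
      else None)"

(* valid traces (as reachability from a given initial state) and valid messages,
   by simultaneous induction *)
inductive reach :: "nat \<Rightarrow> cstate_comp \<Rightarrow> cstate_comp \<Rightarrow> bool"
  and valid_msg :: "nat \<Rightarrow> msg \<Rightarrow> bool" where
  reach_init: "comp_initial n \<sigma>0 \<Longrightarrow> reach n \<sigma>0 \<sigma>0"
| reach_step: "\<lbrakk> reach n \<sigma>0 \<sigma>; \<mu> = None \<or> (\<exists>m. \<mu> = Some m \<and> valid_msg n m);
                 comp_step n i l \<sigma> \<mu> = Some (\<sigma>', out) \<rbrakk> \<Longrightarrow> reach n \<sigma>0 \<sigma>'"
| valid_out: "\<lbrakk> reach n \<sigma>0 \<sigma>; \<mu> = None \<or> (\<exists>m. \<mu> = Some m \<and> valid_msg n m);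
                 comp_step n i l \<sigma> \<mu> = Some (\<sigma>', Some m') \<rbrakk> \<Longrightarrow> valid_msg n m'"

definition valid_state :: "nat \<Rightarrow> cstate_comp \<Rightarrow> bool" where
  "valid_state n \<sigma> \<longleftrightarrow> (\<exists>\<sigma>0. reach n \<sigma>0 \<sigma>)"

definition final_states :: "nat \<Rightarrow> cstate_comp set" where
  "final_states n = {\<sigma>. valid_state n \<sigma> \<and>
       (\<forall>i\<in>{1..n}. \<exists>Ob r s. \<sigma> i = Run Ob r s \<and> s \<noteq> U)}"

definition valid_transition :: "nat \<Rightarrow> nat \<Rightarrow> label \<Rightarrow> cstate_comp \<Rightarrow> cstate_comp \<Rightarrow> bool" where
  "valid_transition n i l \<sigma> \<sigma>' \<longleftrightarrow> valid_state n \<sigma> \<and>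
     (\<exists>\<mu> out. (\<mu> = None \<or> (\<exists>m. \<mu> = Some m \<and> valid_msg n m)) \<and>
              comp_step n i l \<sigma> \<mu> = Some (\<sigma>', out))"

end

theory Submission imports Defs begin

text \<open>Let \<open>M\<close> be the set of muddy children fixed by the consistent initial state. Along every
valid trace each running child's round and status stay sound with respect to \<open>M\<close>: a muddy
child is undecided only while its round is below \<open>|M| - 1\<close> and otherwise knows it is muddy
exactly in round \<open>|M| - 1\<close>; a clean child is undecided only below round \<open>|M|\<close> and otherwise
knows it is clean exactly in round \<open>|M|\<close>. In a non-final state either some child has not yet
initialised, and initialising raises its round, or some child is undecided. An undecided child
of least round has a muddy partner, and by soundness the message the partner can emit is
accepted by one of the cases of \<open>receive\<close> that strictly raises the child's round.\<close>

definition sound_status :: "nat set \<Rightarrow> nat \<Rightarrow> nat \<Rightarrow> status \<Rightarrow> bool" where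
  "sound_status M i r s \<longleftrightarrow>
     (if i \<in> M then (s = U \<and> r + 2 \<le> card M) \<or> (s = Mu \<and> r + 1 = card M)
      else (s = U \<and> r + 1 \<le> card M) \<or> (s = Cl \<and> r = card M))"

lemma sound_status_init:
  assumes "finite M" "M \<noteq> {}"
  shows "sound_status M i 0 (if M - {i} = {} then Mu else U)"
proof (cases "M - {i} = {}")
  case True
  with assms(2) have "M = {i}" by auto
  then show ?thesis by (simp add: sound_status_def)
next
  case False
  with assms(1) have "card (M - {i}) > 0" by (simp add: card_gt_0_iff)
  with assms have "i \<in> M \<Longrightarrow> 2 \<le> card M" and "1 \<le> card M"
    by (auto simp: card_gt_0_iff Suc_le_eq)
  with False show ?thesis by (auto simp: sound_status_def)
qed

text \<open>The disjunction is what the composition constraint allows a receiver to see of a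
sender: its current status, or an undecided status of an earlier round.\<close>

lemma recv_sound_status:
  assumes "recv (M - {i}) r s (j, r', s') = Some st"
    and "sound_status M i r s" "sound_status M j rj sj"
    and "(s' = sj \<and> r' = rj) \<or> (s' = U \<and> r' < rj)"
    and "j = i \<longrightarrow> rj = r \<and> sj = s"
  shows "\<exists>r2 s2. st = Run (M - {i}) r2 s2 \<and> sound_status M i r2 s2"
  using assms unfolding sound_status_def card_Diff_singleton_if
  by (auto split: if_splits)

text \<open>Minimality of the receiver's round among undecided children rules out the cases of
\<open>receive\<close> that ignore an undecided message from an earlier round.\<close>

lemma recv_round_increases:
  assumes "j \<in> M" "j \<noteq> i"
    and "sound_status M i r U" "sound_status M j rj sj"
    and "sj = U \<longrightarrow> r \<le> rj"
  shows "\<exists>st. recv (M - {i}) r U (j, rj, sj) = Some st \<and> round st > int r"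
proof (cases "i \<in> M")
  case True
  with assms show ?thesis unfolding sound_status_def card_Diff_singleton_if
    by (auto split: if_splits)
next
  case False
  with assms show ?thesis unfolding sound_status_def card_Diff_singleton_if
    by (auto split: if_splits)
qed

lemma reach_induct [consumes 1, case_names init step]:
  assumes "reach n \<sigma>0 \<sigma>"
    and "comp_initial n \<sigma>0 \<Longrightarrow> P \<sigma>0"
    and "\<And>\<sigma> \<mu> i l \<sigma>' out. reach n \<sigma>0 \<sigma> \<Longrightarrow> P \<sigma> \<Longrightarrow>
           comp_step n i l \<sigma> \<mu> = Some (\<sigma>', out) \<Longrightarrow> P \<sigma>'"
  shows "P \<sigma>"
  using assms
  by (induction rule: reach_valid_msg.inducts(1)[where ?P2.0 = "\<lambda>_ _. True"]) blast+

lemma comp_stepE: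
  assumes "comp_step n i l \<sigma> \<mu> = Some (\<sigma>', out)"
  obtains st where "i \<in> {1..n}" "phi n i l \<sigma> \<mu>"
    "child_step i l (\<sigma> i) \<mu> = Some (st, out)" "\<sigma>' = \<sigma>(i := st)"
  using assms by (auto simp: comp_step_def split: if_splits)

lemma child_stepE:
  assumes "child_step i l c \<mu> = Some (st, out)"
  obtains (init) Ob where "l = LInit" "c = Init Ob" "st = Run Ob 0 (if Ob = {} then Mu else U)"
  | (emit) Ob r s where "l = LEmit" "c = Run Ob r s" "st = c"
  | (receive) Ob r s m where "l = LReceive" "c = Run Ob r s" "\<mu> = Some m" "recv Ob r s m = Some st"
  using assms by (cases l; cases c; cases \<mu>) (auto simp del: recv.simps)

definition muddy :: "nat \<Rightarrow> cstate_comp \<Rightarrow> nat set" where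
  "muddy n \<sigma> = (\<Union>i\<in>{1..n}. obs (\<sigma> i))"

definition sound_config :: "nat \<Rightarrow> nat set \<Rightarrow> cstate_comp \<Rightarrow> bool" where
  "sound_config n M \<sigma> \<longleftrightarrow> M \<subseteq> {1..n} \<and> M \<noteq> {} \<and>
     (\<forall>i\<in>{1..n}. obs (\<sigma> i) = M - {i} \<and>
        (\<forall>Ob r s. \<sigma> i = Run Ob r s \<longrightarrow> sound_status M i r s))"

lemma sound_configD:
  assumes "sound_config n M \<sigma>" "i \<in> {1..n}"
  shows "obs (\<sigma> i) = M - {i}" and "\<sigma> i = Run Ob r s \<Longrightarrow> sound_status M i r s"
  using assms unfolding sound_config_def by blast+

lemma sound_config_finite: "sound_config n M \<sigma> \<Longrightarrow> finite M"
  unfolding sound_config_def by (meson finite_atLeastAtMost finite_subset)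

lemma consistent_iff_muddy:
  "consistent n \<sigma> \<longleftrightarrow> muddy n \<sigma> \<noteq> {} \<and> (\<forall>i\<in>{1..n}. obs (\<sigma> i) = muddy n \<sigma> - {i})"
  by (simp add: consistent_def muddy_def Let_def)

lemma sound_config_initial:
  assumes "comp_initial n \<sigma>0" "consistent n \<sigma>0"
  shows "sound_config n (muddy n \<sigma>0) \<sigma>0"
proof -
  have initial: "\<And>i. i \<in> {1..n} \<Longrightarrow> \<exists>Ob. Ob \<subseteq> {1..n} \<and> \<sigma>0 i = Init Ob"
    using assms(1) by (simp add: comp_initial_def)
  then have "muddy n \<sigma>0 \<subseteq> {1..n}" unfolding muddy_def by fastforce
  moreover have "\<And>i Ob r s. i \<in> {1..n} \<Longrightarrow> \<sigma>0 i \<noteq> Run Ob r s"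
    using initial by fastforce
  moreover have "muddy n \<sigma>0 \<noteq> {} \<and> (\<forall>i\<in>{1..n}. obs (\<sigma>0 i) = muddy n \<sigma>0 - {i})"
    using assms(2) by (simp add: consistent_iff_muddy)
  ultimately show ?thesis unfolding sound_config_def by blast
qed

lemma comp_step_sound_config:
  assumes "sound_config n M \<sigma>" "comp_step n i l \<sigma> \<mu> = Some (\<sigma>', out)"
  shows "sound_config n M \<sigma>'"
proof -
  obtain st where i: "i \<in> {1..n}" and constraint: "phi n i l \<sigma> \<mu>"
    and step: "child_step i l (\<sigma> i) \<mu> = Some (st, out)" and \<sigma>': "\<sigma>' = \<sigma>(i := st)"
    using assms(2) by (rule comp_stepE)
  have fin: "finite M" using assms(1) by (rule sound_config_finite)
  have "M \<noteq> {}" using assms(1) by (simp add: sound_config_def)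
  note obs_i = sound_configD(1)[OF assms(1) i] and sound_i = sound_configD(2)[OF assms(1) i]
  have "obs st = M - {i} \<and> (\<forall>Ob r s. st = Run Ob r s \<longrightarrow> sound_status M i r s)"
  using step
  proof (cases rule: child_stepE)
    case (init Ob)
    with obs_i have "st = Run (M - {i}) 0 (if M - {i} = {} then Mu else U)" by simp
    with sound_status_init[OF fin \<open>M \<noteq> {}\<close>] show ?thesis by simp
  next
    case (emit Ob r s)
    with obs_i sound_i show ?thesis by simp
  next
    case (receive Ob r s m)
    obtain j r' s' where m: "m = (j, r', s')" by (cases m)
    with constraint receive obtain Obj rj sj where j: "j \<in> {1..n}" "\<sigma> j = Run Obj rj sj"
      and sent: "(s' = sj \<and> r' = rj) \<or> (s' = U \<and> r' < rj)" by auto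
    have "sound_status M j rj sj" using assms(1) j by (rule sound_configD)
    moreover have "recv (M - {i}) r s (j, r', s') = Some st"
      using receive obs_i m by (simp del: recv.simps)
    moreover have "j = i \<longrightarrow> rj = r \<and> sj = s" using receive j(2) by auto
    ultimately have "\<exists>r2 s2. st = Run (M - {i}) r2 s2 \<and> sound_status M i r2 s2"
      using recv_sound_status[OF _ sound_i[OF \<open>\<sigma> i = Run Ob r s\<close>] _ sent] by simp
    then show ?thesis by auto
  qed
  with assms(1) i \<sigma>' show ?thesis by (auto simp: sound_config_def)
qed

lemma reach_sound_config:
  assumes "reach n \<sigma>0 \<sigma>" "consistent n \<sigma>0"
  shows "sound_config n (muddy n \<sigma>0) \<sigma>"
  using assms(1)
proof (induction rule: reach_induct)
  case init
  then show ?case using assms(2) by (rule sound_config_initial)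
next
  case (step \<sigma> \<mu> i l \<sigma>' out)
  from step(3,2) show ?case by (rule comp_step_sound_config)
qed

lemma sound_config_consistent:
  assumes "sound_config n (muddy n \<sigma>0) \<sigma>" "consistent n \<sigma>0"
  shows "consistent n \<sigma>"
proof -
  have "\<forall>i\<in>{1..n}. obs (\<sigma> i) = obs (\<sigma>0 i)"
    using assms by (simp add: sound_config_def consistent_iff_muddy)
  then have "muddy n \<sigma> = muddy n \<sigma>0" by (simp add: muddy_def)
  with assms show ?thesis by (simp add: sound_config_def consistent_iff_muddy)
qed

lemma emit_valid_msg:
  assumes "reach n \<sigma>0 \<sigma>" "j \<in> {1..n}" "\<sigma> j = Run Ob r s"
  shows "valid_msg n (j, r, s)"
proof -
  have "comp_step n j LEmit \<sigma> None = Some (\<sigma>(j := Run Ob r s), Some (j, r, s))"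
    using assms(2,3) by (simp add: comp_step_def)
  with assms(1) show ?thesis by (blast intro: valid_out)
qed

lemma init_raises_round:
  assumes "valid_state n \<sigma>" "consistent n \<sigma>" "i \<in> {1..n}" "\<sigma> i = Init Ob"
  shows "\<exists>\<sigma>'. valid_transition n i LInit \<sigma> \<sigma>' \<and> round (\<sigma>' i) > round (\<sigma> i)"
proof -
  let ?st = "Run Ob 0 (if Ob = {} then Mu else U)"
  have "comp_step n i LInit \<sigma> None = Some (\<sigma>(i := ?st), None)"
    using assms(2-4) by (simp add: comp_step_def)
  with assms(1) have "valid_transition n i LInit \<sigma> (\<sigma>(i := ?st))"
    unfolding valid_transition_def by blast
  with assms(4) show ?thesis by auto
qed

lemma receive_raises_round:
  assumes "reach n \<sigma>0 \<sigma>" "sound_config n M \<sigma>"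
    and running: "\<forall>j\<in>{1..n}. \<exists>Ob r s. \<sigma> j = Run Ob r s"
    and i: "i \<in> {1..n}" "\<sigma> i = Run Ob r U"
    and least: "\<forall>j\<in>{1..n}. \<forall>Obj rj. \<sigma> j = Run Obj rj U \<longrightarrow> r \<le> rj"
  shows "\<exists>\<sigma>'. valid_transition n i LReceive \<sigma> \<sigma>' \<and> round (\<sigma>' i) > round (\<sigma> i)"
proof -
  have Ob: "Ob = M - {i}" and sound_i: "sound_status M i r U"
    using sound_configD[OF assms(2) i(1)] i(2) by simp_all
  have "M - {i} \<noteq> {}"
  proof
    assume "M - {i} = {}"
    with \<open>sound_config n M \<sigma>\<close> have "M = {i}" by (auto simp: sound_config_def)
    with sound_i show False by (simp add: sound_status_def)
  qed
  then obtain j where j: "j \<in> M" "j \<noteq> i" by blast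
  with assms(2) have j_range: "j \<in> {1..n}" by (auto simp: sound_config_def)
  with running obtain Obj rj sj where sj: "\<sigma> j = Run Obj rj sj" by blast
  with assms(2) j_range have "sound_status M j rj sj" by (rule sound_configD)
  moreover have "sj = U \<longrightarrow> r \<le> rj" using least j_range sj by blast
  ultimately obtain st where st: "recv (M - {i}) r U (j, rj, sj) = Some st" "round st > int r"
    using recv_round_increases[OF j sound_i] by blast
  have "comp_step n i LReceive \<sigma> (Some (j, rj, sj)) = Some (\<sigma>(i := st), None)"
    using i st(1) Ob j_range sj by (simp add: comp_step_def is_msg_def del: recv.simps)
  moreover have "valid_msg n (j, rj, sj)" using assms(1) j_range sj by (rule emit_valid_msg)
  ultimately have "valid_transition n i LReceive \<sigma> (\<sigma>(i := st))"
    using assms(1) unfolding valid_transition_def valid_state_def by blast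
  with i st(2) show ?thesis by auto
qed

lemma least_undecided_exists:
  assumes "valid_state n \<sigma>" "\<sigma> \<notin> final_states n"
    and "\<forall>j\<in>{1..n}. \<exists>Ob r s. \<sigma> j = Run Ob r s"
  obtains i Ob r where "i \<in> {1..n}" "\<sigma> i = Run Ob r U"
    "\<forall>j\<in>{1..n}. \<forall>Obj rj. \<sigma> j = Run Obj rj U \<longrightarrow> r \<le> rj"
proof -
  define undecided where "undecided r \<longleftrightarrow> (\<exists>i\<in>{1..n}. \<exists>Ob. \<sigma> i = Run Ob r U)" for r
  from assms obtain r0 where "undecided r0"
    unfolding final_states_def undecided_def by fastforce
  then obtain r where "undecided r" and "\<And>r'. undecided r' \<Longrightarrow> r \<le> r'"
    using ex_has_least_nat[of undecided r0 id] by auto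
  then show ?thesis using that unfolding undecided_def by blast
qed

theorem mainTheorem4:
  fixes n :: nat and \<sigma>0 \<sigma> :: cstate_comp
  assumes "n \<ge> 1"
    and "reach n \<sigma>0 \<sigma>"
    and "consistent n \<sigma>0"
    and "\<sigma> \<notin> final_states n"
  shows "\<exists>i l \<sigma>'. valid_transition n i l \<sigma> \<sigma>' \<and> round (\<sigma>' i) > round (\<sigma> i)"
proof -
  have sound: "sound_config n (muddy n \<sigma>0) \<sigma>"
    using assms(2,3) by (rule reach_sound_config)
  have valid: "valid_state n \<sigma>" using assms(2) unfolding valid_state_def by blast
  show ?thesis
  proof (cases "\<exists>i\<in>{1..n}. \<exists>Ob. \<sigma> i = Init Ob")
    case True
    then obtain i Ob where "i \<in> {1..n}" "\<sigma> i = Init Ob" by blast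
    moreover have "consistent n \<sigma>" using sound assms(3) by (rule sound_config_consistent)
    ultimately show ?thesis using init_raises_round valid by blast
  next
    case False
    then have running: "\<forall>j\<in>{1..n}. \<exists>Ob r s. \<sigma> j = Run Ob r s"
      by (metis cstate.exhaust)
    obtain i Ob r where "i \<in> {1..n}" "\<sigma> i = Run Ob r U"
      "\<forall>j\<in>{1..n}. \<forall>Obj rj. \<sigma> j = Run Obj rj U \<longrightarrow> r \<le> rj"
      using valid assms(4) running by (rule least_undecided_exists)
    with receive_raises_round[OF assms(2) sound running] show ?thesis by blast
  qed
qed

end
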